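(* Let $n\ge 2$ and consider the star network on agents $\{1,\dots,n\}$ with central agent $1$ and peripheral agents $2,\dots,n$, each peripheral agent linked only to agent $1$. Let $H\in\mathbb{R}^{n\times n}$ have $H_{ii}=1$ for all $i$, $H_{1j}=H_{j1}=\beta$ for $j=2,\dots,n$, and $H_{ij}=0$ otherwise, where $\beta\in\mathbb{R}$. Each agent $i$ has payoff $$u_i(a,\gamma)=-H_{ii}a_i^2-2\sum_{j\neq i}H_{ij}a_ia_j+2\gamma a_i+d_i(a_{-i},\gamma),$$ with a common payoff state $\gamma\in\mathbb{R}$ and public information structures. Suppose $\mu\sim\mathcal{N}(\mu_0,\sigma_0^2)$ and, conditionally on $\mu$, $\gamma\sim\mathcal{N}(\mu,\sigma^2)$ with $\sigma>0$. Under full information disclosure the equilibrium action profile is $a=\gamma H^{-1}\mathbf{1}$ and under no information disclosure it is $a=\mu H^{-1}\mathbf{1}$. Assume that for each agent $i$ the expectation $E[d_i(a_{-i},\gamma)]$ is the same under both policies. If $(n-1)|\beta|<1$, then full information disclosure is preferred over no information disclosure by the central agent and by every peripheral agent, i.e. $E[u_i(\gamma H^{-1}\mathbf{1},\gamma)]>E[u_i(\mu H^{-1}\mathbf{1},\gamma)]$ for every $i\in\{1,\dots,n\}$.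
   Context: $\mathbf{1}$ is the all-ones vector in $\mathbb{R}^n$; $a_{-i}$ denotes the actions of agents other than $i$; $d_i$ is an arbitrary function of $a_{-i}$ and the state. "Public information structure" means all agents receive the same signal; "full information disclosure" reveals $\gamma$, "no information disclosure" leaves agents knowing only $\mu$. Expectations are over the joint distribution of $(\mu,\gamma)$. *)

theory Defs
  imports "HOL-Probability.Probability"
begin

definition star_H :: "nat \<Rightarrow> real \<Rightarrow> nat \<Rightarrow> nat \<Rightarrow> real" where
  "star_H n \<beta> i j =
     (if i \<in> {1..n} \<and> j \<in> {1..n} then
        (if i = j then 1
         else if (i = 1 \<and> j \<noteq> 1) \<or> (j = 1 \<and> i \<noteq> 1) then \<beta> else 0)
      else 0)"

definition Hinv_one :: "nat \<Rightarrow> (nat \<Rightarrow> nat \<Rightarrow> real) \<Rightarrow> nat \<Rightarrow> real" where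
  "Hinv_one n H = (THE v. (\<forall>i\<in>{1..n}. (\<Sum>j=1..n. H i j * v j) = 1)
                        \<and> (\<forall>j. j \<notin> {1..n} \<longrightarrow> v j = 0))"

definition payoff ::
  "nat \<Rightarrow> (nat \<Rightarrow> nat \<Rightarrow> real) \<Rightarrow> (nat \<Rightarrow> (nat \<Rightarrow> real) \<Rightarrow> real \<Rightarrow> real)
     \<Rightarrow> nat \<Rightarrow> (nat \<Rightarrow> real) \<Rightarrow> real \<Rightarrow> real" where
  "payoff n H d i a g =
     - H i i * (a i)\<^sup>2 - 2 * (\<Sum>j\<in>{1..n} - {i}. H i j * a i * a j) + 2 * g * a i + d i a g"

end

theory Submission
  imports Defs
begin

text \<open>For the star network the system \<open>H v = 1\<close> can be solved explicitly, and
  \<open>(n-1)|\<beta>| < 1\<close> makes every entry of \<open>v = H\<^sup>-\<^sup>1 1\<close> positive. Because \<open>(H v)\<^sub>i = 1\<close>, the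
  payoff of agent \<open>i\<close> at the profile \<open>s v\<close> and state \<open>\<gamma>\<close> is
  \<open>v\<^sub>i\<^sup>2 s\<^sup>2 + 2 v\<^sub>i s (\<gamma> - s) + d\<^sub>i\<close>. With \<open>\<gamma> = \<mu> + \<epsilon>\<close>, where the noise \<open>\<epsilon>\<close> is centred and
  independent of \<open>\<mu>\<close>, full disclosure (\<open>s = \<gamma>\<close>) yields \<open>v\<^sub>i\<^sup>2 E[\<gamma>\<^sup>2]\<close> and no disclosure
  (\<open>s = \<mu>\<close>) yields \<open>v\<^sub>i\<^sup>2 E[\<mu>\<^sup>2]\<close>, so every agent gains \<open>v\<^sub>i\<^sup>2 \<sigma>\<^sup>2 > 0\<close>.\<close>

text \<open>The denominator \<open>1 - (n-1)\<beta>\<^sup>2\<close> is \<open>det H\<close>.\<close>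
definition star_Hinv_one :: "nat \<Rightarrow> real \<Rightarrow> nat \<Rightarrow> real" where
  "star_Hinv_one n \<beta> j =
     (if j = 1 then (1 - real (n - 1) * \<beta>) / (1 - real (n - 1) * \<beta>\<^sup>2)
      else if j \<in> {2..n} then (1 - \<beta>) / (1 - real (n - 1) * \<beta>\<^sup>2) else 0)"

lemma star_H_row_sum:
  assumes "n \<ge> 2" and "i \<in> {1..n}"
  shows "(\<Sum>j=1..n. star_H n \<beta> i j * v j) =
     (if i = 1 then v 1 + \<beta> * (\<Sum>j=2..n. v j) else \<beta> * v 1 + v i)"
proof -
  have "{1..n} = insert 1 {2..n}" using assms(1) by auto
  then have split: "(\<Sum>j=1..n. star_H n \<beta> i j * v j)
      = star_H n \<beta> i 1 * v 1 + (\<Sum>j=2..n. star_H n \<beta> i j * v j)"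
    by simp
  show ?thesis
  proof (cases "i = 1")
    case True
    have "(\<Sum>j=2..n. star_H n \<beta> i j * v j) = (\<Sum>j=2..n. \<beta> * v j)"
      using True by (intro sum.cong) (auto simp: star_H_def)
    then show ?thesis using split True assms by (simp add: star_H_def sum_distrib_left)
  next
    case False
    have "(\<Sum>j=2..n. star_H n \<beta> i j * v j) = (\<Sum>j=2..n. if j = i then v j else 0)"
      using False assms(2) by (intro sum.cong) (auto simp: star_H_def)
    also have "\<dots> = v i" using False assms(2) by simp
    finally show ?thesis using split False assms by (simp add: star_H_def)
  qed
qed

lemma star_H_mult_star_Hinv_one:
  assumes n: "n \<ge> 2" and D: "real (n - 1) * \<beta>\<^sup>2 \<noteq> 1" and i: "i \<in> {1..n}"
  shows "(\<Sum>j=1..n. star_H n \<beta> i j * star_Hinv_one n \<beta> j) = 1"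
proof -
  define m where "m = real (n - 1)"
  define v where "v = star_Hinv_one n \<beta>"
  have D': "1 - m * \<beta>\<^sup>2 \<noteq> 0" using D by (simp add: m_def)
  have centre: "v 1 = (1 - m * \<beta>) / (1 - m * \<beta>\<^sup>2)"
    by (simp add: v_def star_Hinv_one_def m_def)
  have leaf: "v j = (1 - \<beta>) / (1 - m * \<beta>\<^sup>2)" if "j \<in> {2..n}" for j
    using that by (simp add: v_def star_Hinv_one_def m_def)
  have leaves: "(\<Sum>j=2..n. v j) = m * ((1 - \<beta>) / (1 - m * \<beta>\<^sup>2))"
    using n by (simp add: leaf m_def)
  show ?thesis
    unfolding v_def[symmetric]
  proof (cases "i = 1")
    case True
    have "(\<Sum>j=1..n. star_H n \<beta> i j * v j) = v 1 + \<beta> * (\<Sum>j=2..n. v j)"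
      using star_H_row_sum[OF n i] True by presburger
    also have "\<dots> = 1"
      unfolding centre leaves using D' by (simp add: field_simps power2_eq_square)
    finally show "(\<Sum>j=1..n. star_H n \<beta> i j * v j) = 1" .
  next
    case False
    then have "i \<in> {2..n}" using i by auto
    have "(\<Sum>j=1..n. star_H n \<beta> i j * v j) = \<beta> * v 1 + v i"
      using star_H_row_sum[OF n i] False by presburger
    also have "\<dots> = 1"
      unfolding centre leaf[OF \<open>i \<in> {2..n}\<close>] using D' by (simp add: field_simps power2_eq_square)
    finally show "(\<Sum>j=1..n. star_H n \<beta> i j * v j) = 1" .
  qed
qed

lemma star_H_mult_eq_one_unique:
  assumes n: "n \<ge> 2" and D: "real (n - 1) * \<beta>\<^sup>2 \<noteq> 1"
    and solves: "\<forall>i\<in>{1..n}. (\<Sum>j=1..n. star_H n \<beta> i j * v j) = 1"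
    and supp: "\<forall>j. j \<notin> {1..n} \<longrightarrow> v j = 0"
  shows "v = star_Hinv_one n \<beta>"
proof
  have leaf: "v i = 1 - \<beta> * v 1" if "i \<in> {2..n}" for i
    using solves star_H_row_sum[OF n, of i \<beta> v] that by auto
  have "(\<Sum>j=2..n. v j) = real (n - 1) * (1 - \<beta> * v 1)"
    using n by (simp add: leaf)
  then have "v 1 + \<beta> * (real (n - 1) * (1 - \<beta> * v 1)) = 1"
    using solves star_H_row_sum[OF n, of 1 \<beta> v] n by auto
  then have "v 1 * (1 - real (n - 1) * \<beta>\<^sup>2) = 1 - real (n - 1) * \<beta>"
    by (simp add: algebra_simps power2_eq_square)
  then have centre: "v 1 = star_Hinv_one n \<beta> 1"
    using D by (simp add: star_Hinv_one_def field_simps)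
  fix j
  consider "j = 1" | "j \<in> {2..n}" | "j \<notin> {1..n}" by fastforce
  then show "v j = star_Hinv_one n \<beta> j"
  proof cases
    case 2
    then show ?thesis
      using leaf[OF 2] centre D
      by (auto simp: star_Hinv_one_def field_simps power2_eq_square)
  qed (use centre supp n in \<open>auto simp: star_Hinv_one_def\<close>)
qed

lemma Hinv_one_star_H:
  assumes n: "n \<ge> 2" and D: "real (n - 1) * \<beta>\<^sup>2 \<noteq> 1"
  shows "Hinv_one n (star_H n \<beta>) = star_Hinv_one n \<beta>"
  unfolding Hinv_one_def
proof (rule the_equality)
  show "(\<forall>i\<in>{1..n}. (\<Sum>j=1..n. star_H n \<beta> i j * star_Hinv_one n \<beta> j) = 1)
      \<and> (\<forall>j. j \<notin> {1..n} \<longrightarrow> star_Hinv_one n \<beta> j = 0)"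
    using star_H_mult_star_Hinv_one[OF n D] n by (auto simp: star_Hinv_one_def)
qed (use star_H_mult_eq_one_unique[OF n D] in blast)

lemma star_coupling_bounds:
  assumes "n \<ge> 2" and "real (n - 1) * \<bar>\<beta>\<bar> < 1"
  shows "real (n - 1) * \<beta>\<^sup>2 < 1" and "real (n - 1) * \<beta> < 1" and "\<beta> < 1"
proof -
  have m: "real (n - 1) \<ge> 1" using assms(1) by simp
  have "1 * \<bar>\<beta>\<bar> \<le> real (n - 1) * \<bar>\<beta>\<bar>" using m by (intro mult_right_mono) auto
  then have "\<bar>\<beta>\<bar> < 1" using assms(2) by linarith
  then have "\<bar>\<beta>\<bar> * \<bar>\<beta>\<bar> \<le> \<bar>\<beta>\<bar> * 1" by (intro mult_left_mono) auto
  then have "\<beta>\<^sup>2 \<le> \<bar>\<beta>\<bar>" by (simp add: power2_eq_square)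
  then have "real (n - 1) * \<beta>\<^sup>2 \<le> real (n - 1) * \<bar>\<beta>\<bar>" by (simp add: mult_left_mono)
  then show "real (n - 1) * \<beta>\<^sup>2 < 1" using assms(2) by linarith
  have "real (n - 1) * \<beta> \<le> real (n - 1) * \<bar>\<beta>\<bar>" by (simp add: mult_left_mono)
  then show "real (n - 1) * \<beta> < 1" using assms(2) by linarith
  show "\<beta> < 1" using \<open>\<bar>\<beta>\<bar> < 1\<close> by linarith
qed

lemma star_Hinv_one_pos:
  assumes "n \<ge> 2" and "real (n - 1) * \<bar>\<beta>\<bar> < 1" and "i \<in> {1..n}"
  shows "star_Hinv_one n \<beta> i > 0"
  using star_coupling_bounds[OF assms(1,2)] assms(3)
  by (auto simp: star_Hinv_one_def)

lemma payoff_scaled_solution: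
  assumes "i \<in> {1..n}" and "H i i = 1" and "(\<Sum>j=1..n. H i j * v j) = 1"
  shows "payoff n H d i (\<lambda>j. s * v j) g
       = (v i)\<^sup>2 * s\<^sup>2 - 2 * v i * s\<^sup>2 + 2 * v i * g * s + d i (\<lambda>j. s * v j) g"
proof -
  have "(\<Sum>j\<in>{1..n} - {i}. H i j * v j) = 1 - v i"
    using assms by (simp add: sum_diff1)
  moreover have "(\<Sum>j\<in>{1..n} - {i}. H i j * (s * v i) * (s * v j))
      = s\<^sup>2 * v i * (\<Sum>j\<in>{1..n} - {i}. H i j * v j)"
    by (simp add: sum_distrib_left power2_eq_square algebra_simps)
  ultimately have "(\<Sum>j\<in>{1..n} - {i}. H i j * (s * v i) * (s * v j)) = s\<^sup>2 * v i * (1 - v i)"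
    by simp
  then show ?thesis
    unfolding payoff_def using assms(2) by (simp add: power2_eq_square algebra_simps)
qed

lemma (in prob_space) normal_distributed_integrable:
  assumes "\<sigma> > 0" and D: "distributed M lborel X (normal_density \<mu> \<sigma>)"
  shows "integrable M X"
  using distributed_integrable[OF D, of "\<lambda>x. x"] integrable_normal_moment_nz_1[OF assms(1)]
  by simp

lemma (in prob_space) normal_distributed_integrable_square:
  assumes "\<sigma> > 0" and D: "distributed M lborel X (normal_density \<mu> \<sigma>)"
  shows "integrable M (\<lambda>x. (X x)\<^sup>2)"
proof -
  have "integrable M (\<lambda>x. (X x - \<mu>)\<^sup>2)"
    using distributed_integrable[OF D, of "\<lambda>x. (x - \<mu>)\<^sup>2"] integrable_normal_moment[OF assms(1)]
    by simp
  then have "integrable M (\<lambda>x. (X x - \<mu>)\<^sup>2 + 2 * \<mu> * X x - \<mu>\<^sup>2)"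
    using normal_distributed_integrable[OF assms] by auto
  then show ?thesis by (simp add: power2_eq_square algebra_simps)
qed

lemma (in prob_space) normal_distributed_second_moment:
  assumes "\<sigma> > 0" and D: "distributed M lborel X (normal_density 0 \<sigma>)"
  shows "expectation (\<lambda>x. (X x)\<^sup>2) = \<sigma>\<^sup>2"
  using normal_distributed_variance[OF assms] normal_distributed_expectation[OF assms] by simp

lemma (in prob_space) integral_quadratic_payoff_gain:
  fixes c :: real
  assumes "integrable M (\<lambda>w. (mu w)\<^sup>2)" and "integrable M (\<lambda>w. (gam w - mu w)\<^sup>2)"
    and "integrable M (\<lambda>w. mu w * (gam w - mu w))"
    and "expectation (\<lambda>w. mu w * (gam w - mu w)) = 0"
    and "integrable M dF" and "integrable M dN" and "expectation dF = expectation dN"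
  shows "(\<integral>w. c\<^sup>2 * (gam w)\<^sup>2 - 2 * c * (gam w)\<^sup>2 + 2 * c * gam w * gam w + dF w \<partial>M)
       = (\<integral>w. c\<^sup>2 * (mu w)\<^sup>2 - 2 * c * (mu w)\<^sup>2 + 2 * c * gam w * mu w + dN w \<partial>M)
         + c\<^sup>2 * expectation (\<lambda>w. (gam w - mu w)\<^sup>2)"
proof -
  let ?e = "\<lambda>w. gam w - mu w"
  have "has_bochner_integral M (\<lambda>w. c\<^sup>2 * (mu w)\<^sup>2 + (2 * c\<^sup>2 * (mu w * ?e w) + (c\<^sup>2 * (?e w)\<^sup>2 + dF w)))
      (c\<^sup>2 * expectation (\<lambda>w. (mu w)\<^sup>2) + (2 * c\<^sup>2 * 0 + (c\<^sup>2 * expectation (\<lambda>w. (?e w)\<^sup>2) + expectation dF)))"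
    using assms by (intro has_bochner_integral_add has_bochner_integral_mult_right)
      (auto simp: has_bochner_integral_iff)
  moreover have "has_bochner_integral M (\<lambda>w. c\<^sup>2 * (mu w)\<^sup>2 + (2 * c * (mu w * ?e w) + dN w))
      (c\<^sup>2 * expectation (\<lambda>w. (mu w)\<^sup>2) + (2 * c * 0 + expectation dF))"
    using assms by (intro has_bochner_integral_add has_bochner_integral_mult_right)
      (auto simp: has_bochner_integral_iff)
  ultimately show ?thesis
    by (auto dest!: has_bochner_integral_integral_eq simp: power2_eq_square algebra_simps)
qed

theorem proposition1:
  fixes n :: nat and \<beta> \<mu>\<^sub>0 \<sigma>\<^sub>0 \<sigma> :: real
    and M :: "'w measure" and mu gam :: "'w \<Rightarrow> real"
    and d :: "nat \<Rightarrow> (nat \<Rightarrow> real) \<Rightarrow> real \<Rightarrow> real"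
  assumes n2: "n \<ge> 2"
    and P: "prob_space M"
    and sig0: "\<sigma>\<^sub>0 > 0" and sig: "\<sigma> > 0"
    and mu_distr: "distributed M lborel mu (normal_density \<mu>\<^sub>0 \<sigma>\<^sub>0)"
    and noise_distr: "distributed M lborel (\<lambda>w. gam w - mu w) (normal_density 0 \<sigma>)"
    and indep: "prob_space.indep_var M borel mu borel (\<lambda>w. gam w - mu w)"
    and d_dep: "\<And>i a a' g. (\<And>j. j \<noteq> i \<Longrightarrow> a j = a' j) \<Longrightarrow> d i a g = d i a' g"
    and d_int_full: "\<And>i. i \<in> {1..n} \<Longrightarrow>
          integrable M (\<lambda>w. d i (\<lambda>j. gam w * Hinv_one n (star_H n \<beta>) j) (gam w))"
    and d_int_none: "\<And>i. i \<in> {1..n} \<Longrightarrow>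
          integrable M (\<lambda>w. d i (\<lambda>j. mu w * Hinv_one n (star_H n \<beta>) j) (gam w))"
    and d_eq: "\<And>i. i \<in> {1..n} \<Longrightarrow>
          (\<integral>w. d i (\<lambda>j. gam w * Hinv_one n (star_H n \<beta>) j) (gam w) \<partial>M)
        = (\<integral>w. d i (\<lambda>j. mu w * Hinv_one n (star_H n \<beta>) j) (gam w) \<partial>M)"
    and beta: "real (n - 1) * \<bar>\<beta>\<bar> < 1"
  shows "\<forall>i\<in>{1..n}.
     (\<integral>w. payoff n (star_H n \<beta>) d i (\<lambda>j. gam w * Hinv_one n (star_H n \<beta>) j) (gam w) \<partial>M)
   > (\<integral>w. payoff n (star_H n \<beta>) d i (\<lambda>j. mu w * Hinv_one n (star_H n \<beta>) j) (gam w) \<partial>M)"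
proof
  interpret prob_space M by (rule P)
  fix i assume i: "i \<in> {1..n}"
  let ?v = "Hinv_one n (star_H n \<beta>)"
  have D: "real (n - 1) * \<beta>\<^sup>2 \<noteq> 1" using star_coupling_bounds[OF n2 beta] by simp
  have v_pos: "?v i > 0"
    using star_Hinv_one_pos[OF n2 beta i] by (simp add: Hinv_one_star_H[OF n2 D])
  have row: "(\<Sum>j=1..n. star_H n \<beta> i j * ?v j) = 1"
    using star_H_mult_star_Hinv_one[OF n2 D i] by (simp add: Hinv_one_star_H[OF n2 D])
  have diag: "star_H n \<beta> i i = 1" using i by (simp add: star_H_def)
  note mu_int = normal_distributed_integrable[OF sig0 mu_distr]
  note noise_int = normal_distributed_integrable[OF sig noise_distr]
  have cross0: "expectation (\<lambda>w. mu w * (gam w - mu w)) = 0"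
    using indep_var_lebesgue_integral[OF indep mu_int noise_int]
      normal_distributed_expectation[OF sig noise_distr] by simp
  note gain = integral_quadratic_payoff_gain[OF
      normal_distributed_integrable_square[OF sig0 mu_distr]
      normal_distributed_integrable_square[OF sig noise_distr]
      indep_var_integrable[OF indep mu_int noise_int] cross0 d_int_full[OF i] d_int_none[OF i] d_eq[OF i]]
  have "(\<integral>w. payoff n (star_H n \<beta>) d i (\<lambda>j. gam w * ?v j) (gam w) \<partial>M)
      = (\<integral>w. payoff n (star_H n \<beta>) d i (\<lambda>j. mu w * ?v j) (gam w) \<partial>M) + (?v i)\<^sup>2 * \<sigma>\<^sup>2"
    using gain by (simp add: payoff_scaled_solution[of i n "star_H n \<beta>" ?v, OF i diag row]
        normal_distributed_second_moment[OF sig noise_distr])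
  then show "(\<integral>w. payoff n (star_H n \<beta>) d i (\<lambda>j. gam w * ?v j) (gam w) \<partial>M)
    > (\<integral>w. payoff n (star_H n \<beta>) d i (\<lambda>j. mu w * ?v j) (gam w) \<partial>M)"
    using v_pos sig by simp
qed

end
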